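(* Let $x\in\Sigma_N$ be such that the Bratteli diagram $\mathcal B_x$ is minimal. Then for every $R>0$ there is $k\in\mathbb{N}$ such that every $\tau\in\Lambda_x$ with $\|\tau\|<R$ is the translation vector between (the control points of) two tiles contained in a single level-$k$ supertile.
   Context: $S_1,\dots,S_N$ are compatible substitution rules on compact prototiles $t_1,\dots,t_M\subset\mathbb{R}^d$: each $S_\ell$ is a family of maps $f_{ijk}(y)=\theta_\ell y+\tau_{ijk}$ ($1\le k\le\kappa_\ell(i,j)$), $\theta_\ell\in(0,1)$, with $t_i=\bigcup_j\bigcup_kf_{ijk}(t_j)$, pieces meeting along boundaries, substitution matrix $F^{(\ell)}_{ij}=\kappa_\ell(i,j)$; compatibility means all supertiles below are tiled edge-to-edge so tilings have finite local complexity. $\Sigma_N=\{1,\dots,N\}^{\mathbb{Z}\setminus\{0\}}$. For $x\in\Sigma_N$, $\mathcal B_x$ is the bi-infinite Bratteli diagram with $M$ vertices per level and $\kappa_{x_n}(i,j)$ edges at level $n$; it is minimal if for every $m$ there is $n>m$ with $F^{(x_n)}\cdots F^{(x_m)}$ strictly positive. A level-$k$ supertile of type $i$ is $(\theta_{x_1}\cdots\theta_{x_k})^{-1}t_i$ subdivided into translates of prototiles by successively applying $S_{x_k},\dots,S_{x_1}$; tilings of $\Omega_x$ (the tiling space, translation-orbit closure) are increasing unions of such nested supertiles. Each prototile carries a fixed marked (control) point in its interior, transported to all its translates. $\Lambda_x$ is the set of return vectors: $\tau$ such that some tiling of $\Omega_x$ contains tiles $t$ and $t+\tau$ which are translates of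 the same prototile. *)

theory Defs
  imports "HOL-Analysis.Analysis"
begin

text \<open>Tiles are pairs (a, v): the prototile with label a translated by the vector v.
  Prototiles are labelled 1..M, substitution rules 1..N.\<close>

definition tile_set :: "(nat \<Rightarrow> 'a::real_vector set) \<Rightarrow> nat \<times> 'a \<Rightarrow> 'a set" where
  "tile_set t p = (\<lambda>y. y + snd p) ` t (fst p)"

definition shift :: "'a::real_vector \<Rightarrow> (nat \<times> 'a) set \<Rightarrow> (nat \<times> 'a) set" where
  "shift u P = (\<lambda>(a, v). (a, v + u)) ` P"

text \<open>Level-k supertile of type i for the rule sequence w (rules w 1, w 2, ...):
  the tile (theta_{w 1} ... theta_{w k})^{-1} t_i subdivided by S_{w k}, ..., S_{w 1}.
  Parameters: theta l (contraction of rule l), kappa l i j (number of pieces of type j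
  in t_i under rule l), tau l i j m (translation of the m-th such piece).\<close>

fun supertile :: "nat \<Rightarrow> (nat \<Rightarrow> real) \<Rightarrow> (nat \<Rightarrow> nat \<Rightarrow> nat \<Rightarrow> nat)
    \<Rightarrow> (nat \<Rightarrow> nat \<Rightarrow> nat \<Rightarrow> nat \<Rightarrow> 'a::real_vector) \<Rightarrow> (nat \<Rightarrow> nat) \<Rightarrow> nat \<Rightarrow> nat
    \<Rightarrow> (nat \<times> 'a) set" where
  "supertile M \<theta> \<kappa> \<tau> w 0 i = {(i, 0)}"
| "supertile M \<theta> \<kappa> \<tau> w (Suc k) i =
     (\<Union>j\<in>{1..M}. \<Union>m\<in>{1..\<kappa> (w (Suc k)) i j}.
        shift ((\<Prod>n\<in>{1..Suc k}. inverse (\<theta> (w n))) *\<^sub>R \<tau> (w (Suc k)) i j m)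
              (supertile M \<theta> \<kappa> \<tau> w k j))"

definition is_tiling :: "nat \<Rightarrow> (nat \<Rightarrow> 'a::real_normed_vector set) \<Rightarrow> (nat \<times> 'a) set \<Rightarrow> bool" where
  "is_tiling M t T \<longleftrightarrow>
     (\<forall>p\<in>T. fst p \<in> {1..M}) \<and>
     (\<Union>p\<in>T. tile_set t p) = UNIV \<and>
     (\<forall>p\<in>T. \<forall>q\<in>T. p \<noteq> q \<longrightarrow> interior (tile_set t p) \<inter> interior (tile_set t q) = {})"

definition pos_seq :: "(int \<Rightarrow> nat) \<Rightarrow> nat \<Rightarrow> nat" where
  "pos_seq x n = x (int n)"

definition tiling_space :: "nat \<Rightarrow> (nat \<Rightarrow> 'a::real_normed_vector set) \<Rightarrow> (nat \<Rightarrow> real)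
    \<Rightarrow> (nat \<Rightarrow> nat \<Rightarrow> nat \<Rightarrow> nat) \<Rightarrow> (nat \<Rightarrow> nat \<Rightarrow> nat \<Rightarrow> nat \<Rightarrow> 'a) \<Rightarrow> (int \<Rightarrow> nat)
    \<Rightarrow> (nat \<times> 'a) set set" where
  "tiling_space M t \<theta> \<kappa> \<tau> x =
     {T. is_tiling M t T \<and>
         (\<forall>P. finite P \<and> P \<subseteq> T \<longrightarrow>
            (\<exists>k i u. i \<in> {1..M} \<and> shift u P \<subseteq> supertile M \<theta> \<kappa> \<tau> (pos_seq x) k i))}"

definition return_vectors :: "nat \<Rightarrow> (nat \<Rightarrow> 'a::real_normed_vector set) \<Rightarrow> (nat \<Rightarrow> real)
    \<Rightarrow> (nat \<Rightarrow> nat \<Rightarrow> nat \<Rightarrow> nat) \<Rightarrow> (nat \<Rightarrow> nat \<Rightarrow> nat \<Rightarrow> nat \<Rightarrow> 'a) \<Rightarrow> (int \<Rightarrow> nat)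
    \<Rightarrow> 'a set" where
  "return_vectors M t \<theta> \<kappa> \<tau> x =
     {v. \<exists>T\<in>tiling_space M t \<theta> \<kappa> \<tau> x. \<exists>a u. (a, u) \<in> T \<and> (a, u + v) \<in> T}"

text \<open>Matrices are functions nat => nat => nat indexed by 1..M.\<close>

definition mat_mult :: "nat \<Rightarrow> (nat \<Rightarrow> nat \<Rightarrow> nat) \<Rightarrow> (nat \<Rightarrow> nat \<Rightarrow> nat) \<Rightarrow> nat \<Rightarrow> nat \<Rightarrow> nat" where
  "mat_mult M A B i j = (\<Sum>l\<in>{1..M}. A i l * B l j)"

text \<open>F^{(x_n)} ... F^{(x_m)} over the indices m..n with 0 omitted, where F^{(l)} = kappa l.\<close>

definition subst_mat_prod :: "nat \<Rightarrow> (nat \<Rightarrow> nat \<Rightarrow> nat \<Rightarrow> nat) \<Rightarrow> (int \<Rightarrow> nat) \<Rightarrow> int \<Rightarrow> int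
    \<Rightarrow> nat \<Rightarrow> nat \<Rightarrow> nat" where
  "subst_mat_prod M \<kappa> x m n =
     foldl (\<lambda>A l. mat_mult M (\<kappa> (x l)) A) (\<lambda>i j. if i = j then 1 else 0)
       (filter (\<lambda>l. l \<noteq> 0) [m..n])"

definition minimal_bratteli :: "nat \<Rightarrow> (nat \<Rightarrow> nat \<Rightarrow> nat \<Rightarrow> nat) \<Rightarrow> (int \<Rightarrow> nat) \<Rightarrow> bool" where
  "minimal_bratteli M \<kappa> x \<longleftrightarrow>
     (\<forall>m. m \<noteq> 0 \<longrightarrow> (\<exists>n>m. n \<noteq> 0 \<and>
        (\<forall>i\<in>{1..M}. \<forall>j\<in>{1..M}. subst_mat_prod M \<kappa> x m n i j > 0)))"

definition supertiles_FLC :: "nat \<Rightarrow> nat \<Rightarrow> (nat \<Rightarrow> 'a::real_normed_vector set) \<Rightarrow> (nat \<Rightarrow> real)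
    \<Rightarrow> (nat \<Rightarrow> nat \<Rightarrow> nat \<Rightarrow> nat) \<Rightarrow> (nat \<Rightarrow> nat \<Rightarrow> nat \<Rightarrow> nat \<Rightarrow> 'a) \<Rightarrow> bool" where
  "supertiles_FLC M N t \<theta> \<kappa> \<tau> \<longleftrightarrow>
     (\<forall>R>0. \<exists>F. finite F \<and>
        (\<forall>w k i P. (\<forall>n\<ge>1. w n \<in> {1..N}) \<and> i \<in> {1..M} \<and> P \<subseteq> supertile M \<theta> \<kappa> \<tau> w k i \<and>
            (\<exists>y. \<forall>p\<in>P. tile_set t p \<subseteq> ball y R) \<longrightarrow> (\<exists>Q\<in>F. \<exists>u. P = shift u Q)))"

end

theory Submission
  imports Defs
begin

text \<open>A return vector v is witnessed by a two-tile patch of a tiling in Omega_x, and that patch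
  is a translate of a patch of some level-k supertile. Minimality forbids a zero column in any
  substitution matrix, so every level-k supertile occurs inside a level-(k+1) supertile; hence v
  is realised inside supertiles of every level beyond k. By finite local complexity only finitely
  many return vectors are shorter than R, and the largest of their thresholds serves all of them.\<close>

lemma shift_zero [simp]: "shift 0 P = P"
  unfolding shift_def by (simp add: case_prod_unfold)

lemma shift_shift: "shift a (shift b P) = shift (b + a) P"
  unfolding shift_def image_image by (simp add: case_prod_beta add.assoc)

lemma mem_shift_iff: "(a, z) \<in> shift u P \<longleftrightarrow> (a, z - u) \<in> P"
  unfolding shift_def by (force simp: image_iff algebra_simps)

lemma shift_mono: "P \<subseteq> Q \<Longrightarrow> shift u P \<subseteq> shift u Q"
  unfolding shift_def by blast

lemma supertile_Suc_embeds:
  assumes "i \<in> {1..M}" and "\<kappa> (w (Suc k)) j i > 0"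
  shows "\<exists>s. shift s (supertile M \<theta> \<kappa> \<tau> w k i) \<subseteq> supertile M \<theta> \<kappa> \<tau> w (Suc k) j"
proof
  have "1 \<in> {1..\<kappa> (w (Suc k)) j i}"
    using assms(2) by simp
  then show "shift ((\<Prod>n\<in>{1..Suc k}. inverse (\<theta> (w n))) *\<^sub>R \<tau> (w (Suc k)) j i 1)
      (supertile M \<theta> \<kappa> \<tau> w k i) \<subseteq> supertile M \<theta> \<kappa> \<tau> w (Suc k) j"
    unfolding supertile.simps(2) using assms(1) by blast
qed

lemma supertile_embeds:
  assumes col: "\<And>n i. i \<in> {1..M} \<Longrightarrow> \<exists>j\<in>{1..M}. \<kappa> (w (Suc n)) j i > 0"
    and "i \<in> {1..M}" and "k \<le> k'"
  shows "\<exists>i'\<in>{1..M}. \<exists>s. shift s (supertile M \<theta> \<kappa> \<tau> w k i) \<subseteq> supertile M \<theta> \<kappa> \<tau> w k' i'"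
  using \<open>k \<le> k'\<close>
proof (induction k' rule: dec_induct)
  case base
  show ?case using \<open>i \<in> {1..M}\<close> by (metis shift_zero order_refl)
next
  case (step n)
  then obtain i' s where i': "i' \<in> {1..M}"
    and s: "shift s (supertile M \<theta> \<kappa> \<tau> w k i) \<subseteq> supertile M \<theta> \<kappa> \<tau> w n i'"
    by blast
  obtain j where j: "j \<in> {1..M}" "\<kappa> (w (Suc n)) j i' > 0"
    using col i' by blast
  obtain s' where "shift s' (supertile M \<theta> \<kappa> \<tau> w n i') \<subseteq> supertile M \<theta> \<kappa> \<tau> w (Suc n) j"
    using supertile_Suc_embeds i' j(2) by blast
  with shift_mono[OF s, of s'] have
    "shift (s + s') (supertile M \<theta> \<kappa> \<tau> w k i) \<subseteq> supertile M \<theta> \<kappa> \<tau> w (Suc n) j"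
    by (simp add: shift_shift)
  with j show ?case by blast
qed

lemma foldl_mat_mult_zero_column:
  assumes "\<forall>l\<in>{1..M}. A l i = 0"
  shows "\<forall>l\<in>{1..M}. foldl (\<lambda>A n. mat_mult M (B n) A) A ns l i = 0"
  using assms
proof (induction ns arbitrary: A)
  case Nil
  then show ?case by simp
next
  case (Cons n ns)
  have "\<forall>l\<in>{1..M}. mat_mult M (B n) A l i = 0"
    using Cons.prems by (simp add: mat_mult_def)
  then show ?case using Cons.IH by simp
qed

lemma minimal_bratteli_column_nonzero:
  assumes minimal: "minimal_bratteli M \<kappa> x" and "m \<noteq> 0" and i: "i \<in> {1..M}"
  shows "\<exists>j\<in>{1..M}. \<kappa> (x m) j i > 0"
proof (rule ccontr)
  assume "\<not> ?thesis"
  then have zero: "\<forall>l\<in>{1..M}. \<kappa> (x m) l i = 0" by auto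
  obtain n where "n > m"
    and pos: "\<forall>i\<in>{1..M}. \<forall>j\<in>{1..M}. subst_mat_prod M \<kappa> x m n i j > 0"
    using minimal \<open>m \<noteq> 0\<close> unfolding minimal_bratteli_def by blast
  have "filter (\<lambda>l. l \<noteq> 0) [m..n] = m # filter (\<lambda>l. l \<noteq> 0) [m+1..n]"
    using \<open>n > m\<close> \<open>m \<noteq> 0\<close> by (simp add: upto_rec1)
  moreover have "\<forall>l\<in>{1..M}. mat_mult M (\<kappa> (x m)) (\<lambda>i j. if i = j then 1 else 0) l i = 0"
    using zero i by (simp add: mat_mult_def if_distrib sum.delta cong: if_cong)
  ultimately have "\<forall>l\<in>{1..M}. subst_mat_prod M \<kappa> x m n l i = 0"
    unfolding subst_mat_prod_def by (simp add: foldl_mat_mult_zero_column)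
  with pos i show False by fastforce
qed

definition supertile_displacements :: "nat \<Rightarrow> (nat \<Rightarrow> real) \<Rightarrow> (nat \<Rightarrow> nat \<Rightarrow> nat \<Rightarrow> nat)
    \<Rightarrow> (nat \<Rightarrow> nat \<Rightarrow> nat \<Rightarrow> nat \<Rightarrow> 'a::real_vector) \<Rightarrow> (nat \<Rightarrow> nat) \<Rightarrow> nat \<Rightarrow> 'a set" where
  "supertile_displacements M \<theta> \<kappa> \<tau> w k =
     {v. \<exists>i\<in>{1..M}. \<exists>a\<in>{1..M}. \<exists>u.
        (a, u) \<in> supertile M \<theta> \<kappa> \<tau> w k i \<and> (a, u + v) \<in> supertile M \<theta> \<kappa> \<tau> w k i}"

lemma incseq_supertile_displacements:
  assumes "\<And>n i. i \<in> {1..M} \<Longrightarrow> \<exists>j\<in>{1..M}. \<kappa> (w (Suc n)) j i > 0"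
  shows "incseq (supertile_displacements M \<theta> \<kappa> \<tau> w)"
proof (intro monoI subsetI)
  fix k k' :: nat and v
  assume "k \<le> k'" and "v \<in> supertile_displacements M \<theta> \<kappa> \<tau> w k"
  then obtain i a u where i: "i \<in> {1..M}" and "a \<in> {1..M}"
    and in_S: "(a, u) \<in> supertile M \<theta> \<kappa> \<tau> w k i" "(a, u + v) \<in> supertile M \<theta> \<kappa> \<tau> w k i"
    unfolding supertile_displacements_def by blast
  from supertile_embeds[where w = w and \<kappa> = \<kappa>, OF assms i \<open>k \<le> k'\<close>, of \<theta> \<tau>]
  obtain i' s where "i' \<in> {1..M}" and "shift s (supertile M \<theta> \<kappa> \<tau> w k i) \<subseteq> supertile M \<theta> \<kappa> \<tau> w k' i'"
    by blast
  then have "(a, u + s) \<in> supertile M \<theta> \<kappa> \<tau> w k' i'" "(a, u + s + v) \<in> supertile M \<theta> \<kappa> \<tau> w k' i'"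
    using in_S by (auto simp: mem_shift_iff algebra_simps)
  with \<open>i' \<in> {1..M}\<close> \<open>a \<in> {1..M}\<close> show "v \<in> supertile_displacements M \<theta> \<kappa> \<tau> w k'"
    unfolding supertile_displacements_def by blast
qed

lemma incseq_supertile_displacements_pos_seq:
  assumes "minimal_bratteli M \<kappa> x"
  shows "incseq (supertile_displacements M \<theta> \<kappa> \<tau> (pos_seq x))"
proof (rule incseq_supertile_displacements)
  fix n i assume "i \<in> {1..M}"
  from minimal_bratteli_column_nonzero[OF assms _ this, of "int (Suc n)"]
  show "\<exists>j\<in>{1..M}. \<kappa> (pos_seq x (Suc n)) j i > 0"
    unfolding pos_seq_def by simp
qed

lemma supertile_displacement_between_control_points:
  assumes "v \<in> supertile_displacements M \<theta> \<kappa> \<tau> w k"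
  shows "\<exists>i\<in>{1..M}. \<exists>p\<in>supertile M \<theta> \<kappa> \<tau> w k i. \<exists>q\<in>supertile M \<theta> \<kappa> \<tau> w k i.
    v = (c (fst q) + snd q) - (c (fst p) + snd p)"
proof -
  obtain i a u where i: "i \<in> {1..M}"
    and p: "(a, u) \<in> supertile M \<theta> \<kappa> \<tau> w k i" and q: "(a, u + v) \<in> supertile M \<theta> \<kappa> \<tau> w k i"
    using assms unfolding supertile_displacements_def by auto
  have "v = (c (fst (a, u + v)) + snd (a, u + v)) - (c (fst (a, u)) + snd (a, u))"
    by simp
  with i p q show ?thesis
    by blast
qed

lemma return_vectors_subset_supertile_displacements:
  "return_vectors M t \<theta> \<kappa> \<tau> x \<subseteq> (\<Union>k. supertile_displacements M \<theta> \<kappa> \<tau> (pos_seq x) k)"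
proof
  fix v assume "v \<in> return_vectors M t \<theta> \<kappa> \<tau> x"
  then obtain T a u where T: "T \<in> tiling_space M t \<theta> \<kappa> \<tau> x" and au: "(a, u) \<in> T" "(a, u + v) \<in> T"
    unfolding return_vectors_def by blast
  then have "a \<in> {1..M}"
    unfolding tiling_space_def is_tiling_def by force
  obtain k i s where "i \<in> {1..M}"
    and "shift s {(a, u), (a, u + v)} \<subseteq> supertile M \<theta> \<kappa> \<tau> (pos_seq x) k i"
    using T au unfolding tiling_space_def by (auto dest!: spec[of _ "{(a, u), (a, u + v)}"])
  moreover have "(a, u + s) \<in> shift s {(a, u), (a, u + v)}" "(a, u + s + v) \<in> shift s {(a, u), (a, u + v)}"
    by (simp_all add: mem_shift_iff)
  ultimately have "v \<in> supertile_displacements M \<theta> \<kappa> \<tau> (pos_seq x) k"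
    unfolding supertile_displacements_def using \<open>a \<in> {1..M}\<close> by blast
  then show "v \<in> (\<Union>k. supertile_displacements M \<theta> \<kappa> \<tau> (pos_seq x) k)"
    by blast
qed

lemma tile_set_subset_ball:
  assumes "\<forall>y\<in>t a. norm y \<le> B" and "norm (u' - u) < r"
  shows "tile_set t (a, u') \<subseteq> ball u (B + r)"
proof
  fix z assume "z \<in> tile_set t (a, u')"
  then obtain y where "y \<in> t a" and z: "z = y + (u' - u) + u"
    unfolding tile_set_def by auto
  have "dist u z = norm (y + (u' - u))"
    unfolding z dist_norm by (metis add_diff_cancel_right' norm_minus_commute)
  also have "\<dots> \<le> norm y + norm (u' - u)"
    by (rule norm_triangle_ineq)
  finally have "dist u z \<le> norm y + norm (u' - u)" .
  with assms \<open>y \<in> t a\<close> show "z \<in> ball u (B + r)" by fastforce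
qed

lemma finite_short_supertile_displacements:
  assumes FLC: "supertiles_FLC M N t \<theta> \<kappa> \<tau>"
    and compact_tiles: "\<forall>i\<in>{1..M}. compact (t i)"
    and w: "\<forall>n\<ge>1. w n \<in> {1..N}"
  shows "finite ((\<Union>k. supertile_displacements M \<theta> \<kappa> \<tau> w k) \<inter> {v. norm v < R})"
    (is "finite ?V")
proof -
  have "bounded (\<Union>a\<in>{1..M}. t a)"
    using compact_tiles by (auto intro!: bounded_UN compact_imp_bounded)
  then obtain B where "B > 0" and B: "\<forall>a\<in>{1..M}. \<forall>y\<in>t a. norm y \<le> B"
    unfolding bounded_pos by auto
  have "B + \<bar>R\<bar> > 0"
    using \<open>B > 0\<close> by simp
  from FLC[unfolded supertiles_FLC_def, rule_format, OF this] obtain F where "finite F"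
    and F: "\<forall>w k i P. (\<forall>n\<ge>1. w n \<in> {1..N}) \<and> i \<in> {1..M} \<and> P \<subseteq> supertile M \<theta> \<kappa> \<tau> w k i \<and>
      (\<exists>y. \<forall>p\<in>P. tile_set t p \<subseteq> ball y (B + \<bar>R\<bar>)) \<longrightarrow> (\<exists>Q\<in>F. \<exists>u. P = shift u Q)"
    by blast
  have "?V \<subseteq> (\<Union>Q\<in>{Q\<in>F. finite Q}. (\<lambda>(p, q). snd q - snd p) ` (Q \<times> Q))"
  proof
    fix v assume "v \<in> ?V"
    then obtain k i a u where "norm v < R" "i \<in> {1..M}" "a \<in> {1..M}"
      and P: "{(a, u), (a, u + v)} \<subseteq> supertile M \<theta> \<kappa> \<tau> w k i"
      unfolding supertile_displacements_def by auto
    have "norm (u - u) < \<bar>R\<bar>" "norm (u + v - u) < \<bar>R\<bar>"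
      using \<open>norm v < R\<close> by auto
    then have "\<forall>p\<in>{(a, u), (a, u + v)}. tile_set t p \<subseteq> ball u (B + \<bar>R\<bar>)"
      using tile_set_subset_ball[of t a B] B \<open>a \<in> {1..M}\<close> by simp
    with w \<open>i \<in> {1..M}\<close> P obtain Q u0 where "Q \<in> F" and "{(a, u), (a, u + v)} = shift u0 Q"
      using F[rule_format, of w i "{(a, u), (a, u + v)}" k] by blast
    then have "Q = shift (- u0) {(a, u), (a, u + v)}"
      by (simp add: shift_shift)
    then have "finite Q" "(a, u - u0) \<in> Q" "(a, u + v - u0) \<in> Q"
      by (auto simp: shift_def)
    then have "v \<in> (\<lambda>(p, q). snd q - snd p) ` (Q \<times> Q)"
      by (intro image_eqI[of _ _ "((a, u - u0), (a, u + v - u0))"]) simp_all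
    with \<open>Q \<in> F\<close> \<open>finite Q\<close> show "v \<in> (\<Union>Q\<in>{Q\<in>F. finite Q}. (\<lambda>(p, q). snd q - snd p) ` (Q \<times> Q))"
      by blast
  qed
  moreover have "finite (\<Union>Q\<in>{Q\<in>F. finite Q}. (\<lambda>(p, q). snd q - snd p) ` (Q \<times> Q))"
    using \<open>finite F\<close> by auto
  ultimately show ?thesis
    by (rule finite_subset)
qed

lemma finite_subset_incseq_UN:
  fixes D :: "nat \<Rightarrow> 'a set"
  assumes "finite A" and "A \<subseteq> (\<Union>k. D k)" and "incseq D"
  obtains k where "A \<subseteq> D k"
proof -
  have "\<forall>v\<in>A. eventually (\<lambda>k. v \<in> D k) sequentially"
  proof
    fix v assume "v \<in> A"
    then obtain k0 where "v \<in> D k0"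
      using assms(2) by blast
    then show "eventually (\<lambda>k. v \<in> D k) sequentially"
      unfolding eventually_sequentially using incseqD[OF \<open>incseq D\<close>] by blast
  qed
  then have "eventually (\<lambda>k. \<forall>v\<in>A. v \<in> D k) sequentially"
    by (rule eventually_ball_finite[OF \<open>finite A\<close>])
  then show thesis
    using that unfolding eventually_sequentially by blast
qed

theorem lemma4:
  fixes M N :: nat
    and t :: "nat \<Rightarrow> 'a::euclidean_space set"
    and c :: "nat \<Rightarrow> 'a"
    and \<theta> :: "nat \<Rightarrow> real"
    and \<kappa> :: "nat \<Rightarrow> nat \<Rightarrow> nat \<Rightarrow> nat"
    and \<tau> :: "nat \<Rightarrow> nat \<Rightarrow> nat \<Rightarrow> nat \<Rightarrow> 'a"
    and x :: "int \<Rightarrow> nat"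
  assumes M: "M \<ge> 1" and N: "N \<ge> 1"
    and compact_tiles: "\<forall>i\<in>{1..M}. compact (t i)"
    and control_pts: "\<forall>i\<in>{1..M}. c i \<in> interior (t i)"
    and theta: "\<forall>l\<in>{1..N}. 0 < \<theta> l \<and> \<theta> l < 1"
    and subst: "\<forall>l\<in>{1..N}. \<forall>i\<in>{1..M}.
        t i = (\<Union>j\<in>{1..M}. \<Union>k\<in>{1..\<kappa> l i j}. (\<lambda>y. \<theta> l *\<^sub>R y + \<tau> l i j k) ` t j)"
    and pieces: "\<forall>l\<in>{1..N}. \<forall>i\<in>{1..M}. \<forall>j\<in>{1..M}. \<forall>k\<in>{1..\<kappa> l i j}.
        \<forall>j'\<in>{1..M}. \<forall>k'\<in>{1..\<kappa> l i j'}. (j, k) \<noteq> (j', k') \<longrightarrow>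
          interior ((\<lambda>y. \<theta> l *\<^sub>R y + \<tau> l i j k) ` t j) \<inter>
          interior ((\<lambda>y. \<theta> l *\<^sub>R y + \<tau> l i j' k') ` t j') = {}"
    and compatible: "supertiles_FLC M N t \<theta> \<kappa> \<tau>"
    and x_in_Sigma: "\<forall>n. n \<noteq> 0 \<longrightarrow> x n \<in> {1..N}"
    and minimal: "minimal_bratteli M \<kappa> x"
  shows "\<forall>R>0. \<exists>k::nat. \<forall>v\<in>return_vectors M t \<theta> \<kappa> \<tau> x. norm v < R \<longrightarrow>
           (\<exists>i\<in>{1..M}. \<exists>p\<in>supertile M \<theta> \<kappa> \<tau> (pos_seq x) k i.
              \<exists>q\<in>supertile M \<theta> \<kappa> \<tau> (pos_seq x) k i.
                 v = (c (fst q) + snd q) - (c (fst p) + snd p))"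
proof (intro allI impI)
  fix R :: real
  let ?D = "supertile_displacements M \<theta> \<kappa> \<tau> (pos_seq x)"
  let ?V = "return_vectors M t \<theta> \<kappa> \<tau> x \<inter> {v. norm v < R}"
  have w: "\<forall>n\<ge>1. pos_seq x n \<in> {1..N}"
    using x_in_Sigma unfolding pos_seq_def by auto
  have V_sub: "?V \<subseteq> (\<Union>k. ?D k) \<inter> {v. norm v < R}"
    by (rule Int_mono[OF return_vectors_subset_supertile_displacements order_refl])
  then have "finite ?V"
    using finite_short_supertile_displacements[OF compatible compact_tiles w] by (rule finite_subset)
  moreover have "?V \<subseteq> (\<Union>k. ?D k)"
    using V_sub by blast
  ultimately obtain k where "?V \<subseteq> ?D k"
    using incseq_supertile_displacements_pos_seq[OF minimal] by (rule finite_subset_incseq_UN)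
  then show "\<exists>k. \<forall>v\<in>return_vectors M t \<theta> \<kappa> \<tau> x. norm v < R \<longrightarrow>
      (\<exists>i\<in>{1..M}. \<exists>p\<in>supertile M \<theta> \<kappa> \<tau> (pos_seq x) k i. \<exists>q\<in>supertile M \<theta> \<kappa> \<tau> (pos_seq x) k i.
         v = (c (fst q) + snd q) - (c (fst p) + snd p))"
    by (intro exI[of _ k] ballI impI supertile_displacement_between_control_points) blast
qed

end
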